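(* Let $R \to S$ be a ring homomorphism with the stable prime extension property. (a) If $R$ and $S$ are quasilocal with maximal ideals $\mathfrak{m}$ and $\mathfrak{n}$ and $R \to S$ is a local homomorphism, then the kernel of $R \to S$ is contained in the nilradical of $R$; in particular, if $R$ is reduced then $R \to S$ is injective. (b) For every prime ideal $P$ of $R$, either $PS = S$ or the contraction of $PS$ to $R$ equals $P$.
   Context: All rings are commutative with identity. A ring homomorphism $R \to S$ has the prime extension property if for every prime ideal $P$ of $R$, $PS$ is prime in $S$ or $PS = S$; it has the stable prime extension property if for every $n \ge 0$, $R[X_1,\dots,X_n] \to S[X_1,\dots,X_n]$ has the prime extension property. A quasilocal ring is a ring with a unique maximal ideal (not necessarily Noetherian). *)

theory Defs
  imports "HOL-Algebra.Algebra" "HOL-Library.Poly_Mapping"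
begin

definition type_ring :: "('a::comm_ring_1) ring" where
  "type_ring = \<lparr>carrier = UNIV, monoid.mult = (*), one = 1, ring.zero = 0, add = (+)\<rparr>"

text \<open>The polynomial ring A[X_0,...,X_{n-1}]: polynomials are finitely supported maps
  from monomials (finitely supported exponent vectors) to coefficients, restricted to
  monomials that only involve the first n variables.\<close>
definition mpoly_ring :: "nat \<Rightarrow> (((nat \<Rightarrow>\<^sub>0 nat) \<Rightarrow>\<^sub>0 'a::comm_ring_1) ring)" where
  "mpoly_ring n = \<lparr>carrier = {p. \<forall>m\<in>Poly_Mapping.keys p. Poly_Mapping.keys m \<subseteq> {..<n}},
                   monoid.mult = (*), one = 1, ring.zero = 0, add = (+)\<rparr>"

definition prime_ext_prop :: "('a, 'c) ring_scheme \<Rightarrow> ('b, 'd) ring_scheme \<Rightarrow> ('a \<Rightarrow> 'b) \<Rightarrow> bool" where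
  "prime_ext_prop A B h \<longleftrightarrow>
     (\<forall>P. primeideal P A \<longrightarrow>
        primeideal (genideal B (h ` P)) B \<or> genideal B (h ` P) = carrier B)"

definition stable_prime_ext_prop :: "('a::comm_ring_1 \<Rightarrow> 'b::comm_ring_1) \<Rightarrow> bool" where
  "stable_prime_ext_prop f \<longleftrightarrow>
     (\<forall>n. prime_ext_prop (mpoly_ring n :: ((nat \<Rightarrow>\<^sub>0 nat) \<Rightarrow>\<^sub>0 'a) ring)
                         (mpoly_ring n :: ((nat \<Rightarrow>\<^sub>0 nat) \<Rightarrow>\<^sub>0 'b) ring)
                         (Poly_Mapping.map f))"

definition quasilocal :: "('a, 'c) ring_scheme \<Rightarrow> bool" where
  "quasilocal A \<longleftrightarrow> (\<exists>!m. maximalideal m A)"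

definition nilradical :: "('a::comm_ring_1) set" where
  "nilradical = {a. \<exists>k::nat. a ^ k = 0}"

definition reduced_ring :: "'a::comm_ring_1 itself \<Rightarrow> bool" where
  "reduced_ring _ \<longleftrightarrow> (nilradical :: 'a set) = {0}"

end

theory Submission
  imports Defs "HOL-Computational_Algebra.Polynomial"
begin

text \<open>Let \<open>P\<close> be a prime of \<open>R\<close> with \<open>PS \<noteq> S\<close>, and let \<open>a \<notin> P\<close> with \<open>f(a) \<in> PS\<close>.
  The contraction \<open>Q\<close> of \<open>P[T]\<close> along \<open>X \<mapsto> aT, Y \<mapsto> aT\<^sup>2\<close> is a prime of \<open>R[X,Y]\<close>
  containing \<open>aY - X\<^sup>2\<close>. Every element of \<open>Q\<close> has its constant term and (as \<open>a \<notin> P\<close>) its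
  \<open>X\<close>-coefficient in \<open>P\<close>, so the extension \<open>QS[X,Y]\<close> lies in \<open>PS + PS\<cdot>X + (X\<^sup>2, Y)\<close>;
  in particular it is proper, hence prime by the prime extension property in two variables.
  Since \<open>f(a) \<in> PS\<close>, it contains \<open>f(a)Y\<close> and therefore \<open>X\<^sup>2\<close>, hence \<open>X\<close>, a contradiction.
  This is (b); for (a), a non-nilpotent \<open>a\<close> avoids some prime \<open>P\<close>, and locality makes
  \<open>PS \<subseteq> \<nn>\<close> proper, so \<open>f(a) = 0\<close> would force \<open>a \<in> P\<close>.\<close>

section \<open>Ideals of subrings of a commutative ring type\<close>

definition ring_closed :: "'a::comm_ring_1 set \<Rightarrow> bool" where
  "ring_closed C \<longleftrightarrow>
     0 \<in> C \<and> 1 \<in> C \<and> (\<forall>x\<in>C. - x \<in> C) \<and> (\<forall>x\<in>C. \<forall>y\<in>C. x + y \<in> C \<and> x * y \<in> C)"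

definition set_ring :: "'a::comm_ring_1 set \<Rightarrow> 'a ring" where
  "set_ring C = \<lparr>carrier = C, monoid.mult = (*), one = 1, ring.zero = 0, add = (+)\<rparr>"

definition ideal_in :: "'a::comm_ring_1 set \<Rightarrow> 'a set \<Rightarrow> bool" where
  "ideal_in C I \<longleftrightarrow>
     I \<subseteq> C \<and> 0 \<in> I \<and> (\<forall>x\<in>I. \<forall>y\<in>I. x + y \<in> I) \<and> (\<forall>r\<in>C. \<forall>x\<in>I. r * x \<in> I)"

definition prime_ideal_in :: "'a::comm_ring_1 set \<Rightarrow> 'a set \<Rightarrow> bool" where
  "prime_ideal_in C P \<longleftrightarrow>
     ideal_in C P \<and> 1 \<notin> P \<and> (\<forall>x\<in>C. \<forall>y\<in>C. x * y \<in> P \<longrightarrow> x \<in> P \<or> y \<in> P)"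

lemma set_ring_simps [simp]:
  "carrier (set_ring C) = C" "monoid.mult (set_ring C) = (*)" "one (set_ring C) = 1"
  "ring.zero (set_ring C) = 0" "add (set_ring C) = (+)"
  by (simp_all add: set_ring_def)

lemma ring_closed_UNIV [simp]: "ring_closed UNIV"
  by (simp add: ring_closed_def)

lemma cring_set_ring:
  assumes "ring_closed C" shows "cring (set_ring C)"
proof (rule cringI)
  show "abelian_group (set_ring C)"
    using assms unfolding ring_closed_def
    by (intro abelian_groupI) (auto simp: algebra_simps intro: bexI[of _ "- _"])
  show "Group.comm_monoid (set_ring C)"
    using assms by (intro comm_monoidI) (auto simp: ring_closed_def algebra_simps)
qed (simp add: algebra_simps)

lemma a_inv_set_ring:
  assumes "ring_closed C" "x \<in> C" shows "a_inv (set_ring C) x = - x"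
proof -
  interpret cring "set_ring C" by (rule cring_set_ring[OF assms(1)])
  show ?thesis
    using assms minus_equality[of "- x" x] by (simp add: ring_closed_def)
qed

lemma ideal_in_uminus:
  assumes "ideal_in C I" "ring_closed C" "x \<in> I" shows "- x \<in> I"
proof -
  have "- 1 \<in> C" using assms(2) by (simp add: ring_closed_def)
  then have "(- 1) * x \<in> I" using assms(1,3) unfolding ideal_in_def by blast
  then show ?thesis by simp
qed

lemma ideal_in_diff:
  assumes "ideal_in C I" "ring_closed C" "x \<in> I" "y \<in> I" shows "x - y \<in> I"
  using assms(1,3) ideal_in_uminus[OF assms(1,2,4)] unfolding ideal_in_def
  by (simp only: diff_conv_add_uminus)

lemma ideal_in_mult_right:
  assumes "ideal_in C I" "x \<in> I" "r \<in> C" shows "x * r \<in> I"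
  using assms unfolding ideal_in_def by (simp add: mult.commute)

lemma ideal_in_sum:
  assumes "ideal_in C I" "\<And>k. k \<in> A \<Longrightarrow> h k \<in> I" shows "sum h A \<in> I"
  using assms(2)
  by (induct A rule: infinite_finite_induct) (use assms(1) in \<open>auto simp: ideal_in_def\<close>)

lemma ideal_in_eq_if_one:
  assumes "ideal_in C I" "1 \<in> I" shows "I = C"
  using assms unfolding ideal_in_def by (metis mult.right_neutral subsetI subset_antisym)

lemma ideal_set_ring_iff:
  assumes "ring_closed C" shows "ideal I (set_ring C) \<longleftrightarrow> ideal_in C I"
proof
  assume "ideal I (set_ring C)"
  then interpret ideal I "set_ring C" .
  show "ideal_in C I"
    using a_subset additive_subgroup.zero_closed[OF is_additive_subgroup]
      additive_subgroup.a_closed[OF is_additive_subgroup] I_l_closed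
    by (auto simp: ideal_in_def)
next
  assume I: "ideal_in C I"
  interpret cring "set_ring C" by (rule cring_set_ring[OF assms])
  show "ideal I (set_ring C)"
  proof (rule idealI)
    show "subgroup I (add_monoid (set_ring C))"
    proof (rule subgroup.intro)
      fix x assume "x \<in> I"
      then show "inv\<^bsub>add_monoid (set_ring C)\<^esub> x \<in> I"
        using I a_inv_set_ring[OF assms] ideal_in_uminus[OF I assms]
        by (auto simp: a_inv_def ideal_in_def)
    qed (use I in \<open>auto simp: ideal_in_def\<close>)
  qed (use I ideal_in_mult_right[OF I] in \<open>auto simp: ideal_in_def ring_axioms\<close>)
qed

lemma primeideal_set_ring_iff:
  assumes "ring_closed C" shows "primeideal P (set_ring C) \<longleftrightarrow> prime_ideal_in C P"
proof
  assume "primeideal P (set_ring C)"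
  then interpret primeideal P "set_ring C" .
  have "ideal_in C P" using ideal_set_ring_iff[OF assms] is_ideal by simp
  then show "prime_ideal_in C P"
    using I_notcarr I_prime ideal_in_eq_if_one by (fastforce simp: prime_ideal_in_def)
next
  assume "prime_ideal_in C P"
  then show "primeideal P (set_ring C)"
    using ideal_set_ring_iff[OF assms] cring_set_ring[OF assms] assms
    by (intro primeidealI) (auto simp: prime_ideal_in_def ring_closed_def)
qed

lemma maximalideal_set_ring_iff:
  assumes "ring_closed C"
  shows "maximalideal M (set_ring C) \<longleftrightarrow>
    ideal_in C M \<and> 1 \<notin> M \<and> (\<forall>J. ideal_in C J \<and> M \<subseteq> J \<longrightarrow> J = M \<or> J = C)"
proof
  assume "maximalideal M (set_ring C)"
  then interpret maximalideal M "set_ring C" .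
  have M: "ideal_in C M" using ideal_set_ring_iff[OF assms] is_ideal by simp
  moreover have "1 \<notin> M" using I_notcarr ideal_in_eq_if_one[OF M] by auto
  moreover have "J = M \<or> J = C" if "ideal_in C J" "M \<subseteq> J" for J
    using I_maximal[of J] that ideal_set_ring_iff[OF assms] by (auto simp: ideal_in_def)
  ultimately show "ideal_in C M \<and> 1 \<notin> M \<and> (\<forall>J. ideal_in C J \<and> M \<subseteq> J \<longrightarrow> J = M \<or> J = C)"
    by blast
next
  assume "ideal_in C M \<and> 1 \<notin> M \<and> (\<forall>J. ideal_in C J \<and> M \<subseteq> J \<longrightarrow> J = M \<or> J = C)"
  then show "maximalideal M (set_ring C)"
    using ideal_set_ring_iff[OF assms] assms
    by (intro maximalidealI) (auto simp: ring_closed_def)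
qed

lemma
  assumes "ring_closed C" "S \<subseteq> C"
  shows ideal_in_genideal_set_ring: "ideal_in C (genideal (set_ring C) S)"
    and genideal_set_ring_superset: "S \<subseteq> genideal (set_ring C) S"
proof -
  interpret cring "set_ring C" by (rule cring_set_ring[OF assms(1)])
  show "ideal_in C (genideal (set_ring C) S)"
    using genideal_ideal[of S] assms ideal_set_ring_iff[OF assms(1)] by simp
  show "S \<subseteq> genideal (set_ring C) S"
    using genideal_self[of S] assms by simp
qed

lemma genideal_set_ring_least:
  assumes "ring_closed C" "ideal_in C I" "S \<subseteq> I" shows "genideal (set_ring C) S \<subseteq> I"
  using assms ideal_set_ring_iff[OF assms(1)] by (auto simp: genideal_def)

lemma ideal_in_vimage:
  assumes "ring_closed C" "ideal_in D I" "h ` C \<subseteq> D"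
    and "\<And>x y. x \<in> C \<Longrightarrow> y \<in> C \<Longrightarrow> h (x + y) = h x + h y"
    and "\<And>x y. x \<in> C \<Longrightarrow> y \<in> C \<Longrightarrow> h (x * y) = h x * h y" and "h 0 = 0"
  shows "ideal_in C {x \<in> C. h x \<in> I}"
  using assms unfolding ideal_in_def ring_closed_def by (auto simp: image_subset_iff)

lemma prime_ideal_in_vimage:
  assumes "ring_closed C" "prime_ideal_in D P" "h ` C \<subseteq> D"
    and "\<And>x y. x \<in> C \<Longrightarrow> y \<in> C \<Longrightarrow> h (x + y) = h x + h y"
    and "\<And>x y. x \<in> C \<Longrightarrow> y \<in> C \<Longrightarrow> h (x * y) = h x * h y" and "h 0 = 0" and "h 1 = 1"
  shows "prime_ideal_in C {x \<in> C. h x \<in> P}"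
  using assms ideal_in_vimage[of C D P h] unfolding prime_ideal_in_def by (auto simp: image_subset_iff)

lemma type_ring_eq_set_ring: "type_ring = set_ring UNIV"
  by (simp add: type_ring_def set_ring_def)

lemma ideal_in_genideal_type_ring: "ideal_in UNIV (genideal type_ring S)"
  unfolding type_ring_eq_set_ring by (rule ideal_in_genideal_set_ring) simp_all

lemma ring_hom_type_ringD:
  fixes f :: "'a::comm_ring_1 \<Rightarrow> 'b::comm_ring_1"
  assumes "f \<in> ring_hom type_ring type_ring"
  shows "f (x + y) = f x + f y" "f (x * y) = f x * f y" "f 1 = 1" "f 0 = 0" "f (- x) = - f x"
proof -
  have add: "f (u + v) = f u + f v" for u v
    using ring_hom_add[OF assms] by (simp add: type_ring_eq_set_ring)
  then have "f 0 = 0" by (metis add_cancel_right_right)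
  moreover have "f (- x) = - f x" using add[of x "- x"] \<open>f 0 = 0\<close> by (simp add: eq_neg_iff_add_eq_0 add.commute)
  ultimately show "f (x + y) = f x + f y" "f (x * y) = f x * f y" "f 1 = 1" "f 0 = 0" "f (- x) = - f x"
    using add ring_hom_mult[OF assms] ring_hom_one[OF assms] by (simp_all add: type_ring_eq_set_ring)
qed

section \<open>Ideals maximal with respect to avoiding the powers of an element\<close>

lemma ideal_in_Union_chain:
  assumes "\<C> \<noteq> {}" "subset.chain {I. ideal_in C I} \<C>"
  shows "ideal_in C (\<Union>\<C>)"
  unfolding ideal_in_def
proof (intro conjI ballI)
  have ideals: "\<And>I. I \<in> \<C> \<Longrightarrow> ideal_in C I"
    and chain: "\<And>I J. I \<in> \<C> \<Longrightarrow> J \<in> \<C> \<Longrightarrow> I \<subseteq> J \<or> J \<subseteq> I"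
    using assms(2) by (auto simp: subset.chain_def)
  show "\<Union>\<C> \<subseteq> C" using ideals unfolding ideal_in_def by blast
  show "0 \<in> \<Union>\<C>" using assms(1) ideals by (auto simp: ideal_in_def)
  fix x assume "x \<in> \<Union>\<C>"
  then obtain I where I: "I \<in> \<C>" "x \<in> I" by blast
  show "r * x \<in> \<Union>\<C>" if "r \<in> C" for r
    using I ideals[OF I(1)] that unfolding ideal_in_def by blast
  fix y assume "y \<in> \<Union>\<C>"
  then obtain J where J: "J \<in> \<C>" "y \<in> J" by blast
  obtain K where K: "K \<in> \<C>" "x \<in> K" "y \<in> K"
    using chain[OF I(1) J(1)] I J by blast
  then have "x + y \<in> K" using ideals[OF K(1)] unfolding ideal_in_def by blast
  then show "x + y \<in> \<Union>\<C>" using K(1) by blast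
qed

lemma exists_maximal_ideal_avoiding_powers:
  fixes I :: "'a::comm_ring_1 set"
  assumes "ideal_in UNIV I" "\<forall>k. x ^ k \<notin> I"
  obtains Q where "ideal_in UNIV Q" "I \<subseteq> Q" "\<forall>k. x ^ k \<notin> Q"
    "\<And>Q'. ideal_in UNIV Q' \<Longrightarrow> Q \<subseteq> Q' \<Longrightarrow> \<forall>k. x ^ k \<notin> Q' \<Longrightarrow> Q' = Q"
proof -
  let ?A = "{Q. ideal_in UNIV Q \<and> I \<subseteq> Q \<and> (\<forall>k. x ^ k \<notin> Q)}"
  have "\<exists>Q\<in>?A. \<forall>Q'\<in>?A. Q \<subseteq> Q' \<longrightarrow> Q' = Q"
  proof (rule subset_Zorn_nonempty)
    show "?A \<noteq> {}" using assms by blast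
    fix \<C> assume ne: "\<C> \<noteq> {}" and chain: "subset.chain ?A \<C>"
    then have sub: "\<C> \<subseteq> ?A" by (simp add: subset.chain_def)
    have "subset.chain {I. ideal_in UNIV I} \<C>"
      using chain by (auto simp: subset.chain_def)
    then have "ideal_in UNIV (\<Union>\<C>)" by (rule ideal_in_Union_chain[OF ne])
    moreover have "I \<subseteq> \<Union>\<C>" using ne sub by blast
    moreover have "\<forall>k. x ^ k \<notin> \<Union>\<C>" using sub by blast
    ultimately show "\<Union>\<C> \<in> ?A" by blast
  qed
  then obtain Q where "Q \<in> ?A" "\<forall>Q'\<in>?A. Q \<subseteq> Q' \<longrightarrow> Q' = Q" by blast
  then show ?thesis by (intro that) auto
qed

lemma ideal_in_add_principal:
  fixes Q :: "'a::comm_ring_1 set"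
  assumes Q: "ideal_in UNIV Q"
  shows "ideal_in UNIV {q + r * b | q r. q \<in> Q}" "Q \<subseteq> {q + r * b | q r. q \<in> Q}"
    "b \<in> {q + r * b | q r. q \<in> Q}"
proof -
  let ?Qb = "{q + r * b | q r. q \<in> Q}"
  have Q_closed: "q + q' \<in> Q" "s * q \<in> Q" if "q \<in> Q" "q' \<in> Q" for q q' s
    using Q that unfolding ideal_in_def by blast+
  show "ideal_in UNIV ?Qb"
    unfolding ideal_in_def
  proof (intro conjI ballI)
    have "(0::'a) = 0 + 0 * b" by simp
    then show "0 \<in> ?Qb" using Q unfolding ideal_in_def by blast
    fix u v s :: 'a
    assume "u \<in> ?Qb"
    then obtain q r where u: "u = q + r * b" "q \<in> Q" by blast
    have "s * u = s * q + (s * r) * b" using u by (simp add: algebra_simps)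
    then show "s * u \<in> ?Qb" using Q_closed(2)[OF u(2) u(2)] by blast
    assume "v \<in> ?Qb"
    then obtain q' r' where v: "v = q' + r' * b" "q' \<in> Q" by blast
    have "u + v = (q + q') + (r + r') * b" using u v by (simp add: algebra_simps)
    then show "u + v \<in> ?Qb" using Q_closed(1)[OF u(2) v(2)] by blast
  qed simp
  show "Q \<subseteq> ?Qb"
  proof
    fix q assume "q \<in> Q"
    moreover have "q = q + 0 * b" by simp
    ultimately show "q \<in> ?Qb" by blast
  qed
  have "b = 0 + 1 * b" by simp
  then show "b \<in> ?Qb" using Q unfolding ideal_in_def by blast
qed

text \<open>If \<open>bc \<in> Q\<close> with \<open>b, c \<notin> Q\<close>, maximality puts powers of \<open>x\<close> into \<open>Q + (b)\<close> and \<open>Q + (c)\<close>,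
  and their product is a power of \<open>x\<close> in \<open>Q\<close>.\<close>
lemma prime_ideal_in_if_maximal_avoiding_powers:
  fixes Q :: "'a::comm_ring_1 set"
  assumes Q: "ideal_in UNIV Q" "\<forall>k. x ^ k \<notin> Q"
    and max: "\<And>Q'. ideal_in UNIV Q' \<Longrightarrow> Q \<subseteq> Q' \<Longrightarrow> \<forall>k. x ^ k \<notin> Q' \<Longrightarrow> Q' = Q"
  shows "prime_ideal_in UNIV Q"
  unfolding prime_ideal_in_def
proof (intro conjI ballI impI)
  have "x ^ 0 \<notin> Q" using Q(2) by blast
  then show "1 \<notin> Q" by simp
  have power_in_sum: "\<exists>k q r. q \<in> Q \<and> x ^ k = q + r * b" if "b \<notin> Q" for b
  proof (rule ccontr)
    assume "\<not> ?thesis"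
    then have "\<forall>k. x ^ k \<notin> {q + r * b | q r. q \<in> Q}" by blast
    then have "{q + r * b | q r. q \<in> Q} = Q" using max ideal_in_add_principal(1,2)[OF Q(1), of b] by blast
    then show False using ideal_in_add_principal(3)[OF Q(1), of b] that by simp
  qed
  fix b c :: 'a assume bc: "b * c \<in> Q"
  show "b \<in> Q \<or> c \<in> Q"
  proof (rule ccontr)
    assume "\<not> (b \<in> Q \<or> c \<in> Q)"
    then obtain i q1 r1 j q2 r2 where
      "q1 \<in> Q" "x ^ i = q1 + r1 * b" "q2 \<in> Q" "x ^ j = q2 + r2 * c"
      using power_in_sum by meson
    then have "x ^ (i + j) = q1 * (q2 + r2 * c) + (r1 * q2) * b + (r1 * r2) * (b * c)"
      by (simp add: power_add algebra_simps)
    also have "\<dots> \<in> Q"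
    proof -
      have "q1 * (q2 + r2 * c) \<in> Q" "(r1 * q2) * b \<in> Q" "(r1 * r2) * (b * c) \<in> Q"
        using \<open>q1 \<in> Q\<close> \<open>q2 \<in> Q\<close> bc Q(1) ideal_in_mult_right[OF Q(1)] unfolding ideal_in_def
        by (simp_all add: mult.commute)
      then show ?thesis using Q(1) unfolding ideal_in_def by blast
    qed
    finally show False using Q(2) by blast
  qed
qed (rule Q(1))

lemma exists_prime_ideal_not_mem:
  fixes x :: "'a::comm_ring_1"
  assumes "x \<notin> nilradical"
  obtains P where "prime_ideal_in UNIV P" "x \<notin> P"
proof -
  have "ideal_in UNIV {0::'a}" by (simp add: ideal_in_def)
  moreover have "\<forall>k. x ^ k \<notin> {0}" using assms by (simp add: nilradical_def)
  ultimately obtain P where P: "ideal_in UNIV P" "{0} \<subseteq> P" "\<forall>k. x ^ k \<notin> P"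
    "\<And>Q'. ideal_in UNIV Q' \<Longrightarrow> P \<subseteq> Q' \<Longrightarrow> \<forall>k. x ^ k \<notin> Q' \<Longrightarrow> Q' = P"
    by (rule exists_maximal_ideal_avoiding_powers) blast+
  have "x \<notin> P" using P(3) spec[of _ 1] by (metis power_one_right)
  with prime_ideal_in_if_maximal_avoiding_powers[OF P(1,3,4)] show ?thesis by (rule that)
qed

lemma exists_maximalideal_superset:
  fixes I :: "'a::comm_ring_1 set"
  assumes I: "ideal_in UNIV I" "1 \<notin> I"
  obtains M where "maximalideal M type_ring" "I \<subseteq> M"
proof -
  have "\<forall>k. (1::'a) ^ k \<notin> I" using I(2) by simp
  then obtain M where M: "ideal_in UNIV M" "I \<subseteq> M" "\<forall>k. (1::'a) ^ k \<notin> M"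
    and max: "\<And>J. ideal_in UNIV J \<Longrightarrow> M \<subseteq> J \<Longrightarrow> \<forall>k. (1::'a) ^ k \<notin> J \<Longrightarrow> J = M"
    by (rule exists_maximal_ideal_avoiding_powers[OF I(1)]) blast+
  have "1 \<notin> M" using M(3) by simp
  moreover have "J = M \<or> J = UNIV" if "ideal_in UNIV J" "M \<subseteq> J" for J
  proof (cases "1 \<in> J")
    case True
    then show ?thesis using ideal_in_eq_if_one[OF that(1)] by blast
  next
    case False
    then show ?thesis using max[OF that] by simp
  qed
  ultimately have "maximalideal M type_ring"
    unfolding type_ring_eq_set_ring maximalideal_set_ring_iff[OF ring_closed_UNIV]
    using M(1) by blast
  then show ?thesis using that M(2) by blast
qed

section \<open>Coefficient ideals of univariate polynomials\<close>

lemma ideal_in_coeffs_in: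
  assumes I: "ideal_in UNIV I" and down: "\<And>k j. k \<in> K \<Longrightarrow> j \<le> k \<Longrightarrow> j \<in> K"
  shows "ideal_in UNIV {p :: 'a::comm_ring_1 poly. \<forall>k\<in>K. coeff p k \<in> I}"
  unfolding ideal_in_def
proof (intro conjI ballI CollectI)
  fix p q r :: "'a poly" and k
  assume p: "p \<in> {p. \<forall>k\<in>K. coeff p k \<in> I}" and k: "k \<in> K"
  show "coeff (r * p) k \<in> I"
    unfolding coeff_mult
    by (rule ideal_in_sum[OF I]) (use p k down I in \<open>auto simp: ideal_in_def\<close>)
  assume "q \<in> {p. \<forall>k\<in>K. coeff p k \<in> I}"
  then show "coeff (p + q) k \<in> I" using p k I by (simp add: ideal_in_def)
qed (use I in \<open>auto simp: ideal_in_def\<close>)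

lemma prime_ideal_in_coeffs_in:
  assumes P: "prime_ideal_in UNIV P"
  shows "prime_ideal_in UNIV {p :: 'a::comm_ring_1 poly. \<forall>k. coeff p k \<in> P}"
  unfolding prime_ideal_in_def
proof (intro conjI ballI impI)
  have I: "ideal_in UNIV P" using P by (simp add: prime_ideal_in_def)
  show "ideal_in UNIV {p :: 'a poly. \<forall>k. coeff p k \<in> P}"
    using ideal_in_coeffs_in[OF I, of UNIV] by simp
  show "1 \<notin> {p :: 'a poly. \<forall>k. coeff p k \<in> P}"
    using P by (auto simp: prime_ideal_in_def dest: spec[of _ 0])
  fix p q :: "'a poly"
  assume pq: "p * q \<in> {p. \<forall>k. coeff p k \<in> P}"
  show "p \<in> {p. \<forall>k. coeff p k \<in> P} \<or> q \<in> {p. \<forall>k. coeff p k \<in> P}"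
  proof (rule ccontr)
    assume "\<not> ?thesis"
    then obtain i j where "coeff p i \<notin> P" "coeff q j \<notin> P" by auto
    define i0 where "i0 = (LEAST i. coeff p i \<notin> P)"
    define j0 where "j0 = (LEAST j. coeff q j \<notin> P)"
    have i0: "coeff p i0 \<notin> P" "\<And>k. k < i0 \<Longrightarrow> coeff p k \<in> P"
      unfolding i0_def using LeastI[of "\<lambda>i. coeff p i \<notin> P" i] not_less_Least \<open>coeff p i \<notin> P\<close> by blast+
    have j0: "coeff q j0 \<notin> P" "\<And>k. k < j0 \<Longrightarrow> coeff q k \<in> P"
      unfolding j0_def using LeastI[of "\<lambda>j. coeff q j \<notin> P" j] not_less_Least \<open>coeff q j \<notin> P\<close> by blast+
    \<comment> \<open>Every summand of the coefficient of \<open>p q\<close> in degree \<open>i0 + j0\<close> but the leading one lies in \<open>P\<close>.\<close>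
    let ?n = "i0 + j0"
    have split: "coeff (p * q) ?n = coeff p i0 * coeff q j0 + (\<Sum>k\<in>{..?n} - {i0}. coeff p k * coeff q (?n - k))"
      unfolding coeff_mult by (subst sum.remove[of _ i0]) auto
    have rest: "(\<Sum>k\<in>{..?n} - {i0}. coeff p k * coeff q (?n - k)) \<in> P"
    proof (rule ideal_in_sum[OF I])
      fix k assume k: "k \<in> {..?n} - {i0}"
      show "coeff p k * coeff q (?n - k) \<in> P"
      proof (cases "k < i0")
        case True
        then show ?thesis using i0(2) ideal_in_mult_right[OF I] by blast
      next
        case False
        then have "?n - k < j0" using k by auto
        then show ?thesis using j0(2) I by (simp add: ideal_in_def)
      qed
    qed
    have "coeff p i0 * coeff q j0 = coeff (p * q) ?n - (\<Sum>k\<in>{..?n} - {i0}. coeff p k * coeff q (?n - k))"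
      using split by simp
    also have "\<dots> \<in> P" using pq rest ideal_in_diff[OF I] by auto
    finally show False using P i0(1) j0(1) by (auto simp: prime_ideal_in_def)
  qed
qed

section \<open>Polynomials in two variables\<close>

definition mpoly_carrier :: "nat \<Rightarrow> ((nat \<Rightarrow>\<^sub>0 nat) \<Rightarrow>\<^sub>0 'a::comm_ring_1) set" where
  "mpoly_carrier n = {p. \<forall>m\<in>Poly_Mapping.keys p. Poly_Mapping.keys m \<subseteq> {..<n}}"

lemma mpoly_ring_eq_set_ring: "mpoly_ring n = set_ring (mpoly_carrier n)"
  by (simp add: mpoly_ring_def set_ring_def mpoly_carrier_def)

lemma ring_closed_mpoly_carrier: "ring_closed (mpoly_carrier n)"
  unfolding ring_closed_def
proof (intro conjI ballI)
  fix p q :: "(nat \<Rightarrow>\<^sub>0 nat) \<Rightarrow>\<^sub>0 'a"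
  assume "p \<in> mpoly_carrier n" "q \<in> mpoly_carrier n"
  then have p: "\<forall>m\<in>Poly_Mapping.keys p. Poly_Mapping.keys m \<subseteq> {..<n}"
    and q: "\<forall>m\<in>Poly_Mapping.keys q. Poly_Mapping.keys m \<subseteq> {..<n}"
    by (simp_all add: mpoly_carrier_def)
  show "p + q \<in> mpoly_carrier n"
    using p q keys_add[of p q] unfolding mpoly_carrier_def by blast
  have "Poly_Mapping.keys m \<subseteq> {..<n}" if m: "m \<in> Poly_Mapping.keys (p * q)" for m
  proof -
    obtain a b where "m = a + b" "a \<in> Poly_Mapping.keys p" "b \<in> Poly_Mapping.keys q"
      using keys_mult[of p q] m by blast
    then show ?thesis using p q keys_add[of a b] by blast
  qed
  then show "p * q \<in> mpoly_carrier n" by (simp add: mpoly_carrier_def)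
qed (auto simp: mpoly_carrier_def)

lemma single_mem_mpoly_carrier: "Poly_Mapping.keys m \<subseteq> {..<n} \<Longrightarrow> Poly_Mapping.single m c \<in> mpoly_carrier n"
  by (auto simp: mpoly_carrier_def)

lemma lookup_map_strict: "f 0 = 0 \<Longrightarrow> Poly_Mapping.lookup (Poly_Mapping.map f p) m = f (Poly_Mapping.lookup p m)"
  by (simp add: Poly_Mapping.map.rep_eq when_def)

lemma map_mem_mpoly_carrier:
  assumes "f 0 = 0" "p \<in> mpoly_carrier n" shows "Poly_Mapping.map f p \<in> mpoly_carrier n"
proof -
  have "Poly_Mapping.keys (Poly_Mapping.map f p) \<subseteq> Poly_Mapping.keys p"
    using assms(1) by (auto simp: in_keys_iff lookup_map_strict)
  then show ?thesis using assms(2) by (auto simp: mpoly_carrier_def)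
qed

lemma ideal_in_constants:
  assumes "ideal_in (mpoly_carrier n) J" shows "ideal_in UNIV {c. Poly_Mapping.single 0 c \<in> J}"
  using ideal_in_vimage[OF ring_closed_UNIV assms, of "Poly_Mapping.single 0"]
  by (simp add: image_subset_iff single_mem_mpoly_carrier single_add mult_single)

lemma poly_mapping_plus_single_induct [case_names zero plus_single]:
  assumes "P 0" "\<And>p m c. P p \<Longrightarrow> P (p + Poly_Mapping.single m c)"
  shows "P p"
proof (induct p rule: update_induct)
  case (update p m c)
  then have "Poly_Mapping.update m c p = p + Poly_Mapping.single m c"
    by (intro poly_mapping_eqI) (auto simp: lookup_update lookup_add lookup_single in_keys_iff when_def)
  then show ?case using assms(2) update by metis
qed (use assms(1) in simp)

definition mpoly_eval2 :: "'a poly \<Rightarrow> 'a poly \<Rightarrow> ((nat \<Rightarrow>\<^sub>0 nat) \<Rightarrow>\<^sub>0 'a::comm_ring_1) \<Rightarrow> 'a poly" where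
  "mpoly_eval2 x y p =
     (\<Sum>m\<in>Poly_Mapping.keys p. [:Poly_Mapping.lookup p m:] * x ^ Poly_Mapping.lookup m 0 * y ^ Poly_Mapping.lookup m 1)"

lemma mpoly_eval2_add: "mpoly_eval2 x y (p + q) = mpoly_eval2 x y p + mpoly_eval2 x y q"
  unfolding mpoly_eval2_def
  by (rule setsum_keys_plus_distrib) (simp_all add: algebra_simps smult_add_left)

lemma mpoly_eval2_zero [simp]: "mpoly_eval2 x y 0 = 0"
  by (simp add: mpoly_eval2_def)

lemma mpoly_eval2_single:
  "mpoly_eval2 x y (Poly_Mapping.single m c) = [:c:] * x ^ Poly_Mapping.lookup m 0 * y ^ Poly_Mapping.lookup m 1"
  by (simp add: mpoly_eval2_def)

lemma mpoly_eval2_one [simp]: "mpoly_eval2 x y 1 = 1"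
  using mpoly_eval2_single[of x y 0 1] by (simp flip: single_one)

lemma mpoly_eval2_mult: "mpoly_eval2 x y (p * q) = mpoly_eval2 x y p * mpoly_eval2 x y q"
proof (induct p rule: poly_mapping_plus_single_induct)
  case (plus_single p m c)
  have "mpoly_eval2 x y (Poly_Mapping.single m c * q) = mpoly_eval2 x y (Poly_Mapping.single m c) * mpoly_eval2 x y q"
    by (induct q rule: poly_mapping_plus_single_induct)
      (simp_all add: distrib_left mpoly_eval2_add mult_single mpoly_eval2_single lookup_add power_add
        algebra_simps flip: pCons_one)
  then show ?case using plus_single by (simp add: distrib_right mpoly_eval2_add)
qed simp

lemma ideal_in_mpoly_eval2_vimage:
  assumes "ideal_in UNIV I"
  shows "ideal_in (mpoly_carrier n) {p \<in> mpoly_carrier n. mpoly_eval2 x y p \<in> I}"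
  by (rule ideal_in_vimage[OF ring_closed_mpoly_carrier assms])
    (simp_all add: mpoly_eval2_add mpoly_eval2_mult)

lemma prime_ideal_in_mpoly_eval2_vimage:
  assumes "prime_ideal_in UNIV P"
  shows "prime_ideal_in (mpoly_carrier n) {p \<in> mpoly_carrier n. mpoly_eval2 x y p \<in> P}"
  by (rule prime_ideal_in_vimage[OF ring_closed_mpoly_carrier assms])
    (simp_all add: mpoly_eval2_add mpoly_eval2_mult)

lemma monomial2_eqI:
  fixes m m' :: "nat \<Rightarrow>\<^sub>0 nat"
  assumes "Poly_Mapping.keys m \<subseteq> {..<2}" "Poly_Mapping.keys m' \<subseteq> {..<2}"
    and "Poly_Mapping.lookup m 0 = Poly_Mapping.lookup m' 0" "Poly_Mapping.lookup m 1 = Poly_Mapping.lookup m' 1"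
  shows "m = m'"
proof (rule poly_mapping_eqI)
  fix i show "Poly_Mapping.lookup m i = Poly_Mapping.lookup m' i"
  proof (cases "i < 2")
    case True then have "i = 0 \<or> i = 1" by auto
    then show ?thesis using assms by auto
  next
    case False then show ?thesis using assms by (metis in_keys_iff lessThan_iff subsetD)
  qed
qed

lemma mpoly_eval2_monom:
  "mpoly_eval2 (monom \<alpha> 1) (monom \<beta> 2) p =
    (\<Sum>m\<in>Poly_Mapping.keys p.
       monom (Poly_Mapping.lookup p m * \<alpha> ^ Poly_Mapping.lookup m 0 * \<beta> ^ Poly_Mapping.lookup m 1)
         (Poly_Mapping.lookup m 0 + 2 * Poly_Mapping.lookup m 1))"
  unfolding mpoly_eval2_def
  by (rule sum.cong) (simp_all add: monom_power mult_monom flip: monom_0)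

lemma coeff_0_mpoly_eval2_monom:
  assumes "p \<in> mpoly_carrier 2"
  shows "coeff (mpoly_eval2 (monom \<alpha> 1) (monom \<beta> 2) p) 0 = Poly_Mapping.lookup p 0"
proof -
  have "coeff (mpoly_eval2 (monom \<alpha> 1) (monom \<beta> 2) p) 0 =
    (\<Sum>m\<in>Poly_Mapping.keys p. if m = 0 then Poly_Mapping.lookup p m else 0)"
    unfolding mpoly_eval2_monom coeff_sum
  proof (rule sum.cong)
    fix m assume "m \<in> Poly_Mapping.keys p"
    then have "Poly_Mapping.keys m \<subseteq> {..<2}" using assms by (auto simp: mpoly_carrier_def)
    then have "m = 0 \<longleftrightarrow> Poly_Mapping.lookup m 0 = 0 \<and> Poly_Mapping.lookup m 1 = 0"
      using monomial2_eqI[of m 0] by auto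
    then show "coeff (monom (Poly_Mapping.lookup p m * \<alpha> ^ Poly_Mapping.lookup m 0 * \<beta> ^ Poly_Mapping.lookup m 1)
       (Poly_Mapping.lookup m 0 + 2 * Poly_Mapping.lookup m 1)) 0 = (if m = 0 then Poly_Mapping.lookup p m else 0)"
      by auto
  qed simp
  also have "\<dots> = Poly_Mapping.lookup p 0"
    by (simp add: sum.delta in_keys_iff)
  finally show ?thesis .
qed

lemma coeff_1_mpoly_eval2_monom:
  assumes "p \<in> mpoly_carrier 2"
  shows "coeff (mpoly_eval2 (monom \<alpha> 1) (monom \<beta> 2) p) 1 = Poly_Mapping.lookup p (Poly_Mapping.single 0 1) * \<alpha>"
proof -
  have "coeff (mpoly_eval2 (monom \<alpha> 1) (monom \<beta> 2) p) 1 =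
    (\<Sum>m\<in>Poly_Mapping.keys p. if m = Poly_Mapping.single 0 1 then Poly_Mapping.lookup p m * \<alpha> else 0)"
    unfolding mpoly_eval2_monom coeff_sum
  proof (rule sum.cong)
    fix m assume "m \<in> Poly_Mapping.keys p"
    then have "Poly_Mapping.keys m \<subseteq> {..<2}" using assms by (auto simp: mpoly_carrier_def)
    then have "m = Poly_Mapping.single 0 1 \<longleftrightarrow> Poly_Mapping.lookup m 0 = 1 \<and> Poly_Mapping.lookup m 1 = 0"
      using monomial2_eqI[of m "Poly_Mapping.single 0 1"] by (auto simp: lookup_single)
    moreover have "Poly_Mapping.lookup m 0 + 2 * Poly_Mapping.lookup m 1 = 1 \<longleftrightarrow>
        Poly_Mapping.lookup m 0 = 1 \<and> Poly_Mapping.lookup m 1 = 0"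
      by presburger
    ultimately show "coeff (monom (Poly_Mapping.lookup p m * \<alpha> ^ Poly_Mapping.lookup m 0 * \<beta> ^ Poly_Mapping.lookup m 1)
       (Poly_Mapping.lookup m 0 + 2 * Poly_Mapping.lookup m 1)) 1 =
       (if m = Poly_Mapping.single 0 1 then Poly_Mapping.lookup p m * \<alpha> else 0)"
      by auto
  qed simp
  also have "\<dots> = Poly_Mapping.lookup p (Poly_Mapping.single 0 1) * \<alpha>"
    by (simp add: sum.delta in_keys_iff)
  finally show ?thesis .
qed

section \<open>The parabola argument\<close>

text \<open>The contraction of \<open>P[T]\<close> along \<open>X \<mapsto> aT, Y \<mapsto> aT\<^sup>2\<close> (\<open>X, Y\<close> being the variables \<open>0, 1\<close>);
  it contains \<open>aY - X\<^sup>2\<close>.\<close>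
definition parabola_ideal :: "'a::comm_ring_1 set \<Rightarrow> 'a \<Rightarrow> ((nat \<Rightarrow>\<^sub>0 nat) \<Rightarrow>\<^sub>0 'a) set" where
  "parabola_ideal P a =
     {g \<in> mpoly_carrier 2. mpoly_eval2 (monom a 1) (monom a 2) g \<in> {p. \<forall>k. coeff p k \<in> P}}"

text \<open>The ideal \<open>I + IX + (X\<^sup>2, Y)\<close>.\<close>
definition low_coeff_ideal :: "'a::comm_ring_1 set \<Rightarrow> ((nat \<Rightarrow>\<^sub>0 nat) \<Rightarrow>\<^sub>0 'a) set" where
  "low_coeff_ideal I =
     {h \<in> mpoly_carrier 2. Poly_Mapping.lookup h 0 \<in> I \<and> Poly_Mapping.lookup h (Poly_Mapping.single 0 1) \<in> I}"

lemma prime_ideal_in_parabola_ideal: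
  "prime_ideal_in UNIV P \<Longrightarrow> prime_ideal_in (mpoly_carrier 2) (parabola_ideal P a)"
  unfolding parabola_ideal_def
  by (intro prime_ideal_in_mpoly_eval2_vimage prime_ideal_in_coeffs_in)

lemma parabola_ideal_low_coeffs:
  assumes P: "prime_ideal_in UNIV P" and "a \<notin> P" and g: "g \<in> parabola_ideal P a"
  shows "Poly_Mapping.lookup g 0 \<in> P" "Poly_Mapping.lookup g (Poly_Mapping.single 0 1) \<in> P"
proof -
  have "g \<in> mpoly_carrier 2" and coeffs: "\<And>k. coeff (mpoly_eval2 (monom a 1) (monom a 2) g) k \<in> P"
    using g by (auto simp: parabola_ideal_def)
  then show "Poly_Mapping.lookup g 0 \<in> P"
    using coeff_0_mpoly_eval2_monom by metis
  have "Poly_Mapping.lookup g (Poly_Mapping.single 0 1) * a \<in> P"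
    using coeffs coeff_1_mpoly_eval2_monom \<open>g \<in> mpoly_carrier 2\<close> by metis
  then show "Poly_Mapping.lookup g (Poly_Mapping.single 0 1) \<in> P"
    using P \<open>a \<notin> P\<close> by (auto simp: prime_ideal_in_def)
qed

lemma single_0_mem_parabola_ideal:
  assumes "ideal_in UNIV P" "p \<in> P" shows "Poly_Mapping.single 0 p \<in> parabola_ideal P a"
  using assms single_mem_mpoly_carrier[of 0 2 p]
  by (simp add: parabola_ideal_def mpoly_eval2_single ideal_in_def coeff_pCons split: nat.split)

lemma parabola_mem_parabola_ideal:
  assumes "ideal_in UNIV P"
  shows "Poly_Mapping.single (Poly_Mapping.single 1 1) a + Poly_Mapping.single (Poly_Mapping.single 0 2) (- 1)
    \<in> parabola_ideal P a"
proof -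
  have "Poly_Mapping.single (Poly_Mapping.single 1 1) a \<in> mpoly_carrier 2"
    "Poly_Mapping.single (Poly_Mapping.single 0 2) (- 1) \<in> mpoly_carrier 2"
    by (rule single_mem_mpoly_carrier; simp del: single_numeral)+
  then have "Poly_Mapping.single (Poly_Mapping.single 1 1) a + Poly_Mapping.single (Poly_Mapping.single 0 2) (- 1)
    \<in> mpoly_carrier 2"
    using ring_closed_mpoly_carrier[where 'a='a, of 2] unfolding ring_closed_def by blast
  moreover have "mpoly_eval2 (monom a 1) (monom a 2)
      (Poly_Mapping.single (Poly_Mapping.single 1 1) a + Poly_Mapping.single (Poly_Mapping.single 0 2) (- 1)) = 0"
    by (simp add: mpoly_eval2_add mpoly_eval2_single lookup_single lookup_numeral when_def
        monom_power mult_monom add_monom power2_eq_square flip: monom_0)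
  ultimately show ?thesis using assms by (simp add: parabola_ideal_def ideal_in_def)
qed

lemma ideal_in_low_coeff_ideal:
  assumes "ideal_in UNIV I" shows "ideal_in (mpoly_carrier 2) (low_coeff_ideal I)"
proof -
  define \<psi> where "\<psi> = mpoly_eval2 (monom (1::'a) 1) (monom 0 2)"
  have "coeff (\<psi> h) 0 = Poly_Mapping.lookup h 0"
    and "coeff (\<psi> h) 1 = Poly_Mapping.lookup h (Poly_Mapping.single 0 1)" if "h \<in> mpoly_carrier 2" for h
    unfolding \<psi>_def using coeff_0_mpoly_eval2_monom[OF that, of 1 0] coeff_1_mpoly_eval2_monom[OF that, of 1 0]
    by simp_all
  then have eq: "low_coeff_ideal I = {h \<in> mpoly_carrier 2. \<psi> h \<in> {p. \<forall>k\<in>{..1}. coeff p k \<in> I}}"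
    by (auto simp: low_coeff_ideal_def atMost_Suc)
  have down: "\<And>k j. k \<in> {..1::nat} \<Longrightarrow> j \<le> k \<Longrightarrow> j \<in> {..1}" by auto
  show ?thesis
    unfolding eq \<psi>_def by (rule ideal_in_mpoly_eval2_vimage[OF ideal_in_coeffs_in[OF assms down]])
qed

lemma var_mem_prime_if_parabola_mem:
  fixes J :: "((nat \<Rightarrow>\<^sub>0 nat) \<Rightarrow>\<^sub>0 'a::comm_ring_1) set"
  assumes J: "prime_ideal_in (mpoly_carrier 2) J"
    and c: "Poly_Mapping.single 0 c \<in> J"
    and parabola: "Poly_Mapping.single (Poly_Mapping.single 1 1) c + Poly_Mapping.single (Poly_Mapping.single 0 2) (- 1) \<in> J"
  shows "Poly_Mapping.single (Poly_Mapping.single 0 1) 1 \<in> J"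
proof -
  have J_ideal: "ideal_in (mpoly_carrier 2) J" using J by (simp add: prime_ideal_in_def)
  have "Poly_Mapping.single (Poly_Mapping.single 1 1) 1 * Poly_Mapping.single 0 c \<in> J"
    using J_ideal c single_mem_mpoly_carrier[of "Poly_Mapping.single 1 1" 2] unfolding ideal_in_def by force
  then have "Poly_Mapping.single (Poly_Mapping.single 1 1) 1 * Poly_Mapping.single 0 c
      - (Poly_Mapping.single (Poly_Mapping.single 1 1) c + Poly_Mapping.single (Poly_Mapping.single 0 2) (- 1)) \<in> J"
    using ideal_in_diff[OF J_ideal ring_closed_mpoly_carrier _ parabola] by blast
  moreover have "Poly_Mapping.single (Poly_Mapping.single 1 1) 1 * Poly_Mapping.single 0 c
      - (Poly_Mapping.single (Poly_Mapping.single 1 1) c + Poly_Mapping.single (Poly_Mapping.single 0 2) (- 1))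
    = (Poly_Mapping.single (Poly_Mapping.single 0 1) 1 * Poly_Mapping.single (Poly_Mapping.single 0 1) 1
        :: (nat \<Rightarrow>\<^sub>0 nat) \<Rightarrow>\<^sub>0 'a)"
  proof -
    have "(Poly_Mapping.single (Poly_Mapping.single 0 1) 1 * Poly_Mapping.single (Poly_Mapping.single 0 1) 1
        :: (nat \<Rightarrow>\<^sub>0 nat) \<Rightarrow>\<^sub>0 'a) = Poly_Mapping.single (Poly_Mapping.single 0 2) 1"
      by (simp only: mult_single mult_1 single_add[symmetric] one_add_one)
    moreover have "- Poly_Mapping.single (Poly_Mapping.single 0 2) (- 1)
        = (Poly_Mapping.single (Poly_Mapping.single 0 2) 1 :: (nat \<Rightarrow>\<^sub>0 nat) \<Rightarrow>\<^sub>0 'a)"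
      by (simp only: single_uminus[symmetric] minus_minus)
    ultimately show ?thesis by (simp add: mult_single)
  qed
  ultimately have "Poly_Mapping.single (Poly_Mapping.single 0 1) 1 * Poly_Mapping.single (Poly_Mapping.single 0 1) 1 \<in> J"
    by simp
  then show ?thesis
    using J single_mem_mpoly_carrier[of "Poly_Mapping.single 0 1" 2] by (auto simp: prime_ideal_in_def)
qed

lemma extension_parabola_ideal_subset_low_coeff_ideal:
  fixes f :: "'a::comm_ring_1 \<Rightarrow> 'b::comm_ring_1"
  assumes f0: "f 0 = 0" and P: "prime_ideal_in UNIV P" "a \<notin> P"
    and I: "ideal_in UNIV I" "f ` P \<subseteq> I"
  shows "genideal (set_ring (mpoly_carrier 2)) (Poly_Mapping.map f ` parabola_ideal P a) \<subseteq> low_coeff_ideal I"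
proof (rule genideal_set_ring_least[OF ring_closed_mpoly_carrier ideal_in_low_coeff_ideal[OF I(1)]])
  show "Poly_Mapping.map f ` parabola_ideal P a \<subseteq> low_coeff_ideal I"
  proof
    fix h assume "h \<in> Poly_Mapping.map f ` parabola_ideal P a"
    then obtain g where g: "g \<in> parabola_ideal P a" "h = Poly_Mapping.map f g" by blast
    then have "h \<in> mpoly_carrier 2"
      using map_mem_mpoly_carrier[of f, OF f0] by (auto simp: parabola_ideal_def)
    then show "h \<in> low_coeff_ideal I"
      using parabola_ideal_low_coeffs[OF P g(1)] g(2) I(2)
      by (auto simp: low_coeff_ideal_def lookup_map_strict[of f, OF f0])
  qed
qed

lemma mem_prime_if_image_mem_extension:
  fixes f :: "'a::comm_ring_1 \<Rightarrow> 'b::comm_ring_1"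
  assumes hom: "f \<in> ring_hom type_ring type_ring"
    and pep: "prime_ext_prop (mpoly_ring 2 :: ((nat \<Rightarrow>\<^sub>0 nat) \<Rightarrow>\<^sub>0 'a) ring)
                (mpoly_ring 2 :: ((nat \<Rightarrow>\<^sub>0 nat) \<Rightarrow>\<^sub>0 'b) ring) (Poly_Mapping.map f)"
    and P: "prime_ideal_in UNIV P"
    and proper: "1 \<notin> genideal (type_ring :: 'b ring) (f ` P)"
    and fa: "f a \<in> genideal (type_ring :: 'b ring) (f ` P)"
  shows "a \<in> P"
proof (rule ccontr)
  assume "a \<notin> P"
  let ?I = "genideal (type_ring :: 'b ring) (f ` P)"
  let ?C = "mpoly_carrier 2 :: ((nat \<Rightarrow>\<^sub>0 nat) \<Rightarrow>\<^sub>0 'b) set"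
  let ?Q = "Poly_Mapping.map f ` parabola_ideal P a"
  define J where "J = genideal (set_ring ?C) ?Q"
  note f = ring_hom_type_ringD[OF hom]
  have "f ` P \<subseteq> ?I"
    unfolding type_ring_eq_set_ring by (rule genideal_set_ring_superset) simp_all
  note I = ideal_in_genideal_type_ring this
  have J_low: "J \<subseteq> low_coeff_ideal ?I"
    unfolding J_def by (rule extension_parabola_ideal_subset_low_coeff_ideal[OF f(4) P \<open>a \<notin> P\<close> I])
  have "?Q \<subseteq> ?C"
    using map_mem_mpoly_carrier[of f, OF f(4)] by (auto simp: parabola_ideal_def)
  then have J: "ideal_in ?C J" "?Q \<subseteq> J"
    unfolding J_def by (simp_all add: ideal_in_genideal_set_ring genideal_set_ring_superset ring_closed_mpoly_carrier)
  have "1 \<notin> J" using J_low proper by (auto simp: low_coeff_ideal_def)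
  moreover have "1 \<in> ?C" using ring_closed_mpoly_carrier[where 'a='b] by (simp add: ring_closed_def)
  ultimately have "J \<noteq> ?C" by blast
  then have J_prime: "prime_ideal_in ?C J"
    using pep prime_ideal_in_parabola_ideal[OF P, of a]
    unfolding prime_ext_prop_def J_def mpoly_ring_eq_set_ring primeideal_set_ring_iff[OF ring_closed_mpoly_carrier]
    by auto
  have "?I \<subseteq> {c. Poly_Mapping.single 0 c \<in> J}"
    unfolding type_ring_eq_set_ring
  proof (rule genideal_set_ring_least[OF ring_closed_UNIV ideal_in_constants[OF J(1)]])
    show "f ` P \<subseteq> {c. Poly_Mapping.single 0 c \<in> J}"
      using J(2) single_0_mem_parabola_ideal[of P _ a] P f(4) by (force simp: prime_ideal_in_def)
  qed
  then have c: "Poly_Mapping.single 0 (f a) \<in> J" using fa by blast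
  have "Poly_Mapping.map f
      (Poly_Mapping.single (Poly_Mapping.single 1 1) a + Poly_Mapping.single (Poly_Mapping.single 0 2) (- 1))
    = (Poly_Mapping.single (Poly_Mapping.single 1 1) (f a) + Poly_Mapping.single (Poly_Mapping.single 0 2) (- 1)
        :: (nat \<Rightarrow>\<^sub>0 nat) \<Rightarrow>\<^sub>0 'b)"
    by (rule poly_mapping_eqI) (simp add: lookup_map_strict[of f, OF f(4)] lookup_add lookup_single when_def f)
  then have parabola:
    "Poly_Mapping.single (Poly_Mapping.single 1 1) (f a) + Poly_Mapping.single (Poly_Mapping.single 0 2) (- 1) \<in> J"
    using J(2) parabola_mem_parabola_ideal[of P a] P by (force simp: prime_ideal_in_def)
  have "Poly_Mapping.single (Poly_Mapping.single 0 1) 1 \<in> J"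
    by (rule var_mem_prime_if_parabola_mem[OF J_prime c parabola])
  then show False
    using J_low proper by (auto simp: low_coeff_ideal_def)
qed

lemma contraction_of_extension:
  fixes f :: "'a::comm_ring_1 \<Rightarrow> 'b::comm_ring_1"
  assumes hom: "f \<in> ring_hom type_ring type_ring"
    and pep: "prime_ext_prop (mpoly_ring 2 :: ((nat \<Rightarrow>\<^sub>0 nat) \<Rightarrow>\<^sub>0 'a) ring)
                (mpoly_ring 2 :: ((nat \<Rightarrow>\<^sub>0 nat) \<Rightarrow>\<^sub>0 'b) ring) (Poly_Mapping.map f)"
    and P: "primeideal P type_ring"
    and proper: "genideal (type_ring :: 'b ring) (f ` P) \<noteq> UNIV"
  shows "{a. f a \<in> genideal (type_ring :: 'b ring) (f ` P)} = P"
proof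
  have "1 \<notin> genideal (type_ring :: 'b ring) (f ` P)"
    using proper ideal_in_eq_if_one[OF ideal_in_genideal_type_ring] by blast
  moreover have "prime_ideal_in UNIV P"
    using P by (simp add: type_ring_eq_set_ring primeideal_set_ring_iff)
  ultimately show "{a. f a \<in> genideal type_ring (f ` P)} \<subseteq> P"
    using mem_prime_if_image_mem_extension[OF hom pep] by blast
  show "P \<subseteq> {a. f a \<in> genideal type_ring (f ` P)}"
    using genideal_set_ring_superset[OF ring_closed_UNIV, of "f ` P"] by (auto simp: type_ring_eq_set_ring)
qed

lemma kernel_subset_nilradical:
  fixes f :: "'a::comm_ring_1 \<Rightarrow> 'b::comm_ring_1"
  assumes hom: "f \<in> ring_hom type_ring type_ring"
    and pep: "prime_ext_prop (mpoly_ring 2 :: ((nat \<Rightarrow>\<^sub>0 nat) \<Rightarrow>\<^sub>0 'a) ring)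
                (mpoly_ring 2 :: ((nat \<Rightarrow>\<^sub>0 nat) \<Rightarrow>\<^sub>0 'b) ring) (Poly_Mapping.map f)"
    and local: "quasilocal (type_ring :: 'a ring)" "maximalideal \<mm> type_ring" "maximalideal \<nn> type_ring"
      "f ` \<mm> \<subseteq> \<nn>"
  shows "{a. f a = 0} \<subseteq> nilradical"
proof (rule subsetI, rule ccontr)
  fix a assume "a \<in> {a. f a = 0}" "a \<notin> nilradical"
  then have "f a = 0" by simp
  obtain P where P: "prime_ideal_in UNIV P" "a \<notin> P"
    using exists_prime_ideal_not_mem[OF \<open>a \<notin> nilradical\<close>] by blast
  obtain M where "maximalideal M type_ring" "P \<subseteq> M"
    using exists_maximalideal_superset P(1) unfolding prime_ideal_in_def by blast
  moreover from this have "M = \<mm>" using local(1,2) unfolding quasilocal_def by blast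
  ultimately have "f ` P \<subseteq> \<nn>" using local(4) by blast
  have \<nn>: "ideal_in UNIV \<nn>" "1 \<notin> \<nn>"
    using local(3) by (simp_all add: type_ring_eq_set_ring maximalideal_set_ring_iff)
  have "genideal (type_ring :: 'b ring) (f ` P) \<subseteq> \<nn>"
    unfolding type_ring_eq_set_ring by (rule genideal_set_ring_least[OF ring_closed_UNIV \<nn>(1) \<open>f ` P \<subseteq> \<nn>\<close>])
  then have proper: "1 \<notin> genideal (type_ring :: 'b ring) (f ` P)" using \<nn>(2) by blast
  have "0 \<in> genideal (type_ring :: 'b ring) (f ` P)"
    using ideal_in_genideal_type_ring unfolding ideal_in_def by blast
  then have "f a \<in> genideal (type_ring :: 'b ring) (f ` P)" by (simp only: \<open>f a = 0\<close>)
  then have "a \<in> P" by (rule mem_prime_if_image_mem_extension[OF hom pep P(1) proper])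
  with P(2) show False by contradiction
qed

lemma inj_if_kernel_subset_nilradical:
  fixes f :: "'a::comm_ring_1 \<Rightarrow> 'b::comm_ring_1"
  assumes hom: "f \<in> ring_hom type_ring type_ring"
    and ker: "{a. f a = 0} \<subseteq> nilradical" and reduced: "reduced_ring TYPE('a)"
  shows "inj f"
proof (rule injI)
  fix x y assume "f x = f y"
  moreover have "f (x - y) = f x - f y"
    using ring_hom_type_ringD(1,5)[OF hom] by (metis diff_conv_add_uminus)
  ultimately have "f (x - y) = 0" by simp
  then have "x - y \<in> nilradical" using ker by blast
  then show "x = y" using reduced unfolding reduced_ring_def by (metis right_minus_eq singletonD)
qed

theorem proposition3p3:
  fixes f :: "'a::comm_ring_1 \<Rightarrow> 'b::comm_ring_1"
  assumes hom: "f \<in> ring_hom (type_ring :: 'a ring) (type_ring :: 'b ring)"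
    and spe: "stable_prime_ext_prop f"
  shows "(\<forall>(\<mm>::'a set) (\<nn>::'b set).
            quasilocal (type_ring :: 'a ring) \<and> quasilocal (type_ring :: 'b ring) \<and>
            maximalideal \<mm> type_ring \<and> maximalideal \<nn> type_ring \<and> f ` \<mm> \<subseteq> \<nn> \<longrightarrow>
              {a. f a = 0} \<subseteq> nilradical \<and>
              (reduced_ring TYPE('a) \<longrightarrow> inj f))
       \<and> (\<forall>P::'a set. primeideal P type_ring \<longrightarrow>
            genideal (type_ring :: 'b ring) (f ` P) = UNIV \<or>
            {a. f a \<in> genideal (type_ring :: 'b ring) (f ` P)} = P)"
proof -
  have pep: "prime_ext_prop (mpoly_ring 2 :: ((nat \<Rightarrow>\<^sub>0 nat) \<Rightarrow>\<^sub>0 'a) ring)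
                (mpoly_ring 2 :: ((nat \<Rightarrow>\<^sub>0 nat) \<Rightarrow>\<^sub>0 'b) ring) (Poly_Mapping.map f)"
    using spe unfolding stable_prime_ext_prop_def by blast
  show ?thesis
  proof (intro conjI allI impI)
    fix \<mm> \<nn> assume "quasilocal (type_ring :: 'a ring) \<and> quasilocal (type_ring :: 'b ring) \<and>
      maximalideal \<mm> type_ring \<and> maximalideal \<nn> type_ring \<and> f ` \<mm> \<subseteq> \<nn>"
    then have ker: "{a. f a = 0} \<subseteq> nilradical"
      using kernel_subset_nilradical[OF hom pep] by blast
    then show "{a. f a = 0} \<subseteq> nilradical" .
    show "reduced_ring TYPE('a) \<Longrightarrow> inj f" by (rule inj_if_kernel_subset_nilradical[OF hom ker])
  next
    fix P assume "primeideal P (type_ring :: 'a ring)"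
    then show "genideal (type_ring :: 'b ring) (f ` P) = UNIV \<or> {a. f a \<in> genideal (type_ring :: 'b ring) (f ` P)} = P"
      using contraction_of_extension[OF hom pep] by blast
  qed
qed

end
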